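(* There is a formula $A$ of $\mathsf{LTL}^{\ll}$ such that for every formula $B$ of $\mathsf{LTL}$ we have $\mathcal{L}_A \neq \mathcal{L}_B$.
   Context: Fix a set $\mathsf{Prop}$ of atomic propositions. Formulas of $\mathsf{LTL}^{\ll}$ are built from atomic propositions $P \in \mathsf{Prop}$ by $\lnot A$, $A \land B$, $\mathsf{X} A$, $A \mathbin{\mathsf{U}} B$ and $A \ll B$; formulas of $\mathsf{LTL}$ are those not containing $\ll$. A model $\sigma$ is an $\omega$-word $\sigma_0\sigma_1\sigma_2\ldots$ of sets of atomic propositions. Satisfaction is defined by: $\sigma,i \models P$ iff $P \in \sigma_i$; $\sigma,i\models \lnot A$ iff not $\sigma,i\models A$; $\sigma,i\models A\land B$ iff both hold; $\sigma,i\models \mathsf{X}A$ iff $\sigma,i+1\models A$; $\sigma,i\models A\mathbin{\mathsf{U}}B$ iff there is $j\ge i$ with $\sigma,j\models B$ and $\sigma,k\models A$ for all $i\le k<j$; $\sigma,i\models A\ll B$ iff for every $b$ there exists $j$ with $\mathrm{card}(A_\sigma^{i,j}) + b \le \mathrm{card}(B_\sigma^{i,j})$, where $A_\sigma^{i,j} := \{k \in \mathbb{N} : i \le k \le j,\ \sigma,k\models A\}$ (quantifiers over $b$, $j$ range over natural numbers). For a formula $A$ whose atomic propositions are $P_1,\dots,P_n$, its language is the $\omega$-language $\mathcal{L}_A := \{\sigma \in \Sigma^\omega : \sigma,0\models A\}$ over the alphabet $\Sigma := 2^{\{P_1,\dots,P_n\}}$. *)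

theory Defs
  imports Main
begin

text \<open>Formulas of LTL with the counting operator (written Ll A B for A << B),
  over atomic propositions of type 'p.\<close>

datatype 'p ltlc =
    Atom 'p
  | FNot "'p ltlc"
  | FAnd "'p ltlc" "'p ltlc"
  | FNext "'p ltlc"
  | FUntil "'p ltlc" "'p ltlc"
  | Ll "'p ltlc" "'p ltlc"

fun is_ltl :: "'p ltlc \<Rightarrow> bool" where
  "is_ltl (Atom P) = True"
| "is_ltl (FNot A) = is_ltl A"
| "is_ltl (FAnd A B) = (is_ltl A \<and> is_ltl B)"
| "is_ltl (FNext A) = is_ltl A"
| "is_ltl (FUntil A B) = (is_ltl A \<and> is_ltl B)"
| "is_ltl (Ll A B) = False"

fun atoms :: "'p ltlc \<Rightarrow> 'p set" where
  "atoms (Atom P) = {P}"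
| "atoms (FNot A) = atoms A"
| "atoms (FAnd A B) = atoms A \<union> atoms B"
| "atoms (FNext A) = atoms A"
| "atoms (FUntil A B) = atoms A \<union> atoms B"
| "atoms (Ll A B) = atoms A \<union> atoms B"

fun sat :: "(nat \<Rightarrow> 'p set) \<Rightarrow> nat \<Rightarrow> 'p ltlc \<Rightarrow> bool" where
  "sat \<sigma> i (Atom P) = (P \<in> \<sigma> i)"
| "sat \<sigma> i (FNot A) = (\<not> sat \<sigma> i A)"
| "sat \<sigma> i (FAnd A B) = (sat \<sigma> i A \<and> sat \<sigma> i B)"
| "sat \<sigma> i (FNext A) = sat \<sigma> (Suc i) A"
| "sat \<sigma> i (FUntil A B) =
     (\<exists>j\<ge>i. sat \<sigma> j B \<and> (\<forall>k. i \<le> k \<and> k < j \<longrightarrow> sat \<sigma> k A))"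
| "sat \<sigma> i (Ll A B) =
     (\<forall>b::nat. \<exists>j::nat.
        card {k. i \<le> k \<and> k \<le> j \<and> sat \<sigma> k A} + b
          \<le> card {k. i \<le> k \<and> k \<le> j \<and> sat \<sigma> k B})"

definition lang :: "'p ltlc \<Rightarrow> (nat \<Rightarrow> 'p set) set" where
  "lang A = {\<sigma>. (\<forall>i. \<sigma> i \<subseteq> atoms A) \<and> sat \<sigma> 0 A}"

end

theory Submission
  imports Defs
begin

text \<open>The formula (\<not>P) \<lless> P holds on the word (P^(N+1) \<emptyset>^N)^\<omega>, where every period
  adds one surplus P, but fails on the balanced word (P^N \<emptyset>^N)^\<omega>. An LTL formula with
  fewer than N nested X cannot tell these words apart: the first arises from the second by
  repeating letters only inside runs of N equal letters, and such stuttering is invisible to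
  Until, which only sees the order of positions, and to X, which looks fewer than N letters ahead.\<close>

fun next_depth :: "'p ltlc \<Rightarrow> nat" where
  "next_depth (Atom P) = 0"
| "next_depth (FNot A) = next_depth A"
| "next_depth (FAnd A B) = max (next_depth A) (next_depth B)"
| "next_depth (FNext A) = Suc (next_depth A)"
| "next_depth (FUntil A B) = max (next_depth A) (next_depth B)"
| "next_depth (Ll A B) = 0"

lemma sat_FUntil_unfold:
  "sat w p (FUntil B C) \<longleftrightarrow> sat w p C \<or> sat w p B \<and> sat w (Suc p) (FUntil B C)"
proof
  assume "sat w p (FUntil B C)"
  then obtain j where "p \<le> j" "sat w j C" "\<forall>k. p \<le> k \<and> k < j \<longrightarrow> sat w k B"
    by auto
  then show "sat w p C \<or> sat w p B \<and> sat w (Suc p) (FUntil B C)"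
    by (cases "j = p") (auto intro!: exI[of _ j])
next
  assume "sat w p C \<or> sat w p B \<and> sat w (Suc p) (FUntil B C)"
  then show "sat w p (FUntil B C)"
    by (auto simp: Suc_le_eq) (metis le_less less_imp_le)
qed

lemma sat_Suc_eq_if_constant:
  assumes "is_ltl B" "next_depth B \<le> K" "\<forall>i\<le>Suc K. w (p + i) = w p"
  shows "sat w (Suc p) B = sat w p B"
  using assms
proof (induction B arbitrary: K p)
  case (Atom P)
  then show ?case using Atom.prems(3)[rule_format, of 1] by simp
next
  case (FNext B)
  then obtain K' where K: "K = Suc K'" "next_depth B \<le> K'"
    by (cases K) auto
  have "\<forall>i\<le>Suc K'. w (Suc p + i) = w (Suc p)"
    using FNext.prems(3) K(1) by (metis add_Suc_shift Suc_le_mono le_add2 Suc_eq_plus1)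
  then show ?case using FNext.IH[of K' "Suc p"] FNext.prems(1) K(2) by simp
next
  case (FUntil B C)
  then have "sat w (Suc p) B = sat w p B" "sat w (Suc p) C = sat w p C" by auto
  then show ?case by (metis sat_FUntil_unfold)
qed auto

lemma unit_step_intermediate_value:
  fixes h :: "nat \<Rightarrow> nat"
  assumes step: "\<forall>x. h (Suc x) = h x \<or> h (Suc x) = Suc (h x)"
  shows "a \<le> b \<Longrightarrow> h a \<le> m \<Longrightarrow> m \<le> h b \<Longrightarrow> \<exists>k. a \<le> k \<and> k \<le> b \<and> h k = m"
proof (induction b)
  case (Suc b)
  show ?case
  proof (cases "a \<le> b \<and> m \<le> h b")
    case True
    then show ?thesis using Suc.IH Suc.prems(2) le_SucI by blast
  next
    case False
    then have "m = h (Suc b)"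
      using Suc.prems step[rule_format, of b] by (metis le_SucE le_antisym)
    then show ?thesis using Suc.prems(1) by blast
  qed
qed simp

lemma until_transfer:
  fixes h :: "nat \<Rightarrow> nat"
  assumes step: "\<forall>x. h (Suc x) = h x \<or> h (Suc x) = Suc (h x)"
    and unbounded: "\<forall>p. \<exists>q. p \<le> h q"
  shows "(\<exists>j\<ge>q. C (h j) \<and> (\<forall>k. q \<le> k \<and> k < j \<longrightarrow> B (h k)))
     \<longleftrightarrow> (\<exists>j\<ge>h q. C j \<and> (\<forall>k. h q \<le> k \<and> k < j \<longrightarrow> B k))"
proof -
  have "mono h"
    unfolding mono_iff_le_Suc by (metis step le_Suc_eq order_refl)
  show ?thesis
  proof
    assume "\<exists>j\<ge>q. C (h j) \<and> (\<forall>k. q \<le> k \<and> k < j \<longrightarrow> B (h k))"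
    then obtain j where j: "q \<le> j" "C (h j)" "\<forall>k. q \<le> k \<and> k < j \<longrightarrow> B (h k)"
      by blast
    have "B m" if m: "h q \<le> m" "m < h j" for m
    proof -
      obtain k where "q \<le> k" "k \<le> j" "h k = m"
        using unit_step_intermediate_value[OF step j(1) m(1)] m(2) by auto
      with j(3) m(2) show ?thesis by (cases "k = j") auto
    qed
    moreover have "h q \<le> h j"
      using monoD[OF \<open>mono h\<close> j(1)] .
    ultimately show "\<exists>j\<ge>h q. C j \<and> (\<forall>k. h q \<le> k \<and> k < j \<longrightarrow> B k)"
      using j(2) by blast
  next
    assume "\<exists>j\<ge>h q. C j \<and> (\<forall>k. h q \<le> k \<and> k < j \<longrightarrow> B k)"
    then obtain j where j: "h q \<le> j" "C j" "\<forall>k. h q \<le> k \<and> k < j \<longrightarrow> B k"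
      by blast
    obtain x where "j \<le> h x"
      using unbounded by blast
    also have "h x \<le> h (max x q)"
      by (rule monoD[OF \<open>mono h\<close>]) simp
    finally have "\<exists>k. q \<le> k \<and> h k = j"
      using unit_step_intermediate_value[OF step _ j(1)] by (meson max.cobounded2)
    define j' where "j' = (LEAST k. q \<le> k \<and> h k = j)"
    have j': "q \<le> j'" "h j' = j"
      using LeastI_ex[OF \<open>\<exists>k. q \<le> k \<and> h k = j\<close>] by (simp_all add: j'_def)
    have "B (h k)" if "q \<le> k" "k < j'" for k
    proof -
      have "h k \<noteq> j"
        using not_less_Least[of k "\<lambda>k. q \<le> k \<and> h k = j"] that by (auto simp: j'_def)
      moreover have "h q \<le> h k" "h k \<le> j"
        using monoD[OF \<open>mono h\<close>] that j' by auto
      ultimately show ?thesis using j(3) by simp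
    qed
    then show "\<exists>j\<ge>q. C (h j) \<and> (\<forall>k. q \<le> k \<and> k < j \<longrightarrow> B (h k))"
      using j' j(2) by blast
  qed
qed

text \<open>w' arises from w by repeating letters, but only inside runs of K + 1 equal letters
  of w; position q of w' is a copy of position h q of w.\<close>
definition stutter_expansion :: "nat \<Rightarrow> (nat \<Rightarrow> 'a) \<Rightarrow> (nat \<Rightarrow> 'a) \<Rightarrow> (nat \<Rightarrow> nat) \<Rightarrow> bool" where
  "stutter_expansion K w w' h \<longleftrightarrow>
     (\<forall>q. w' q = w (h q)) \<and>
     (\<forall>q. h (Suc q) = h q \<or> h (Suc q) = Suc (h q)) \<and>
     (\<forall>p. \<exists>q. p \<le> h q) \<and>
     (\<forall>q. h (Suc q) = h q \<longrightarrow> (\<forall>i\<le>K. w (h q + i) = w (h q)))"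

lemma sat_stutter_expansion:
  assumes "stutter_expansion K w w' h" and "is_ltl B" "next_depth B \<le> K"
  shows "sat w' q B = sat w (h q) B"
proof -
  from assms(1) have copy: "\<forall>q. w' q = w (h q)"
    and step: "\<forall>q. h (Suc q) = h q \<or> h (Suc q) = Suc (h q)"
    and unbounded: "\<forall>p. \<exists>q. p \<le> h q"
    and repeat: "\<forall>q. h (Suc q) = h q \<longrightarrow> (\<forall>i\<le>K. w (h q + i) = w (h q))"
    by (simp_all add: stutter_expansion_def)
  from assms(2,3) show ?thesis
  proof (induction B arbitrary: q)
    case (FNext B)
    then have IH: "sat w' (Suc q) B = sat w (h (Suc q)) B" by simp
    consider "h (Suc q) = Suc (h q)" | "h (Suc q) = h q"
      using step by blast
    then show ?case
    proof cases
      case 2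
      then have "\<forall>i\<le>Suc (next_depth B). w (h q + i) = w (h q)"
        using repeat FNext.prems(2) by auto
      then have "sat w (Suc (h q)) B = sat w (h q) B"
        using sat_Suc_eq_if_constant[OF _ order_refl] FNext.prems(1) by simp
      with 2 IH show ?thesis by simp
    qed (use IH in simp)
  next
    case (FUntil B C)
    then have "sat w' x B = sat w (h x) B" "sat w' x C = sat w (h x) C" for x
      by auto
    then show ?case
      using until_transfer[OF step unbounded, of q "\<lambda>m. sat w m C" "\<lambda>m. sat w m B"] by simp
  qed (use copy in auto)
qed

lemma card_mod_periodic:
  fixes M n :: nat
  shows "card {k. k < M * n \<and> f (k mod M)} = n * card {r. r < M \<and> f r}"
proof -
  let ?R = "{r. r < M \<and> f r}"
  let ?g = "\<lambda>(d, r). M * d + r"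
  have "{k. k < M * n \<and> f (k mod M)} = ?g ` ({..<n} \<times> ?R)"
  proof (intro set_eqI iffI)
    fix k assume k: "k \<in> {k. k < M * n \<and> f (k mod M)}"
    then have "M \<noteq> 0"
      by (metis mult_0 not_less_zero mem_Collect_eq)
    with k have "k div M < n" "k mod M \<in> ?R"
      by (auto simp: less_mult_imp_div_less mult.commute)
    then show "k \<in> ?g ` ({..<n} \<times> ?R)"
      by (auto intro!: image_eqI[of _ _ "(k div M, k mod M)"])
  next
    fix k assume "k \<in> ?g ` ({..<n} \<times> ?R)"
    then obtain d r where "k = M * d + r" "d < n" "r < M" "f r"
      by auto
    moreover have "M * d + r < M * n"
    proof -
      have "M * d + r < M * Suc d"
        using \<open>r < M\<close> by simp
      also have "\<dots> \<le> M * n"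
        using \<open>d < n\<close> by (simp only: mult_le_mono2 Suc_le_eq)
      finally show ?thesis .
    qed
    ultimately show "k \<in> {k. k < M * n \<and> f (k mod M)}"
      by simp
  qed
  moreover have "inj_on ?g ({..<n} \<times> ?R)"
  proof (rule inj_onI, clarsimp)
    fix d r d' r' assume "r < M" "r' < M" "M * d + r = M * d' + r'"
    then have "(M * d + r) div M = (M * d' + r') div M" "(M * d + r) mod M = (M * d' + r') mod M"
      by simp_all
    with \<open>r < M\<close> \<open>r' < M\<close> show "d = d' \<and> r = r'"
      by simp
  qed
  ultimately show ?thesis
    by (simp add: card_image card_cartesian_product)
qed

lemma card_mod_periodic_bounds:
  fixes M j :: nat
  assumes "0 < M"
  shows "j div M * card {r. r < M \<and> f r} \<le> card {k. k \<le> j \<and> f (k mod M)}"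
    and "card {k. k \<le> j \<and> f (k mod M)} \<le> Suc (j div M) * card {r. r < M \<and> f r}"
proof -
  have lower: "k \<le> j" if "k < M * (j div M)" for k
    using that div_times_less_eq_dividend[of j M] by (metis mult.commute order.strict_trans2 less_imp_le)
  have upper: "k < M * Suc (j div M)" if "k \<le> j" for k
    using that assms mod_less_divisor[of M j] div_mult_mod_eq[of j M]
    by (metis add_less_mono1 mult.commute mult_Suc_right add.commute le_less_trans)
  have "{k. k < M * (j div M) \<and> f (k mod M)} \<subseteq> {k. k \<le> j \<and> f (k mod M)}"
    and "{k. k \<le> j \<and> f (k mod M)} \<subseteq> {k. k < M * Suc (j div M) \<and> f (k mod M)}"
    using lower upper by blast+
  then show "j div M * card {r. r < M \<and> f r} \<le> card {k. k \<le> j \<and> f (k mod M)}"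
    and "card {k. k \<le> j \<and> f (k mod M)} \<le> Suc (j div M) * card {r. r < M \<and> f r}"
    by (simp_all add: card_mono card_mod_periodic flip: card_mod_periodic)
qed

definition block_word :: "nat \<Rightarrow> nat \<Rightarrow> 'p \<Rightarrow> nat \<Rightarrow> 'p set" where
  "block_word a b P x = (if x mod (a + b) < a then {P} else {})"

lemma sat_block_word_iff:
  assumes "0 < a + b"
  shows "sat (block_word a b P) 0 (Ll (FNot (Atom P)) (Atom P)) \<longleftrightarrow> b < a"
proof -
  define M where "M = a + b"
  define pos where "pos j = card {k. k \<le> j \<and> k mod M < a}" for j
  define neg where "neg j = card {k. k \<le> j \<and> \<not> k mod M < a}" for j
  have "{r. r < M \<and> r < a} = {..<a}" "{r. r < M \<and> \<not> r < a} = {a..<M}"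
    by (auto simp: M_def)
  then have period: "card {r. r < M \<and> r < a} = a" "card {r. r < M \<and> \<not> r < a} = b"
    by (simp_all add: M_def)
  have "{k. 0 \<le> k \<and> k \<le> j \<and> sat (block_word a b P) k (Atom P)} = {k. k \<le> j \<and> k mod M < a}"
    and "{k. 0 \<le> k \<and> k \<le> j \<and> sat (block_word a b P) k (FNot (Atom P))} = {k. k \<le> j \<and> \<not> k mod M < a}"
    for j by (auto simp: block_word_def M_def)
  then have "sat (block_word a b P) 0 (Ll (FNot (Atom P)) (Atom P)) \<longleftrightarrow> (\<forall>c. \<exists>j. neg j + c \<le> pos j)"
    unfolding sat.simps(6) pos_def neg_def by presburger
  also have "\<dots> \<longleftrightarrow> b < a"
  proof
    assume unbounded: "\<forall>c. \<exists>j. neg j + c \<le> pos j"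
    show "b < a"
    proof (rule ccontr)
      assume "\<not> b < a"
      obtain j where j: "neg j + Suc a \<le> pos j"
        using unbounded by blast
      have "pos j \<le> j div M * a + a"
        using card_mod_periodic_bounds(2)[of M j "\<lambda>r. r < a"] assms period
        by (simp add: pos_def M_def)
      also have "\<dots> \<le> j div M * b + a"
        using \<open>\<not> b < a\<close> by simp
      also have "\<dots> \<le> neg j + a"
        using card_mod_periodic_bounds(1)[of M j "\<lambda>r. \<not> r < a"] assms period
        by (simp add: neg_def M_def)
      finally show False
        using j by simp
    qed
  next
    assume "b < a"
    show "\<forall>c. \<exists>j. neg j + c \<le> pos j"
    proof
      fix c
      have "k \<le> M * Suc c - 1 \<longleftrightarrow> k < M * Suc c" for k
        using assms by (auto simp: M_def)
      then have "pos (M * Suc c - 1) = Suc c * a" "neg (M * Suc c - 1) = Suc c * b"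
        using card_mod_periodic[of M "Suc c" "\<lambda>r. r < a"] card_mod_periodic[of M "Suc c" "\<lambda>r. \<not> r < a"] period
        by (simp_all add: pos_def neg_def)
      moreover have "Suc c * b + c \<le> Suc c * a"
        using mult_le_mono2[of "Suc b" a "Suc c"] \<open>b < a\<close> by simp
      ultimately show "\<exists>j. neg j + c \<le> pos j"
        by metis
    qed
  qed
  finally show ?thesis .
qed

lemma block_word_stutter_expansion:
  assumes "K < a"
  shows "\<exists>h. h 0 = 0 \<and> stutter_expansion K (block_word a b P) (block_word (Suc a) b P) h"
proof -
  define M where "M = a + b"
  txt \<open>Blocks of length M + 1 are mapped onto blocks of length M, doubling the first letter.\<close>
  define h where "h x = x div Suc M * M + (x mod Suc M - 1)" for x
  have "0 < M"
    using assms by (simp add: M_def)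
  have h_block: "h (Suc M * d + r) = M * d + (r - 1)" if "r < Suc M" for d r
    using that by (simp add: h_def del: mult_Suc)
  have w_block: "block_word a b P (M * d + r) = (if r < a then {P} else {})" if "r < M" for d r
    using that by (simp add: block_word_def M_def)
  have w'_block: "block_word (Suc a) b P (Suc M * d + r) = (if r < Suc a then {P} else {})"
    if "r < Suc M" for d r
    using that by (simp add: block_word_def M_def del: mult_Suc)
  have h_Suc: "h (Suc (Suc M * d + r)) = (if r = 0 then h (Suc M * d + r) else Suc (h (Suc M * d + r)))"
    if "r < Suc M" for d r
  proof (cases "r = M")
    case True
    then have "Suc (Suc M * d + r) = Suc M * Suc d + 0"
      by simp
    then show ?thesis
      using True h_block[of r d] h_block[of 0 "Suc d"] \<open>0 < M\<close> by (simp add: algebra_simps)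
  next
    case False
    then have "Suc (Suc M * d + r) = Suc M * d + Suc r" "Suc r < Suc M"
      using that by simp_all
    then show ?thesis
      using h_block[of r d] h_block[of "Suc r" d] that by (cases "r = 0") simp_all
  qed
  have decompose: "\<exists>d r. q = Suc M * d + r \<and> r < Suc M" for q
    by (metis div_mult_mod_eq mod_less_divisor mult.commute zero_less_Suc)
  have "stutter_expansion K (block_word a b P) (block_word (Suc a) b P) h"
    unfolding stutter_expansion_def
  proof (intro conjI allI impI)
    fix q
    obtain d r where q: "q = Suc M * d + r" "r < Suc M"
      using decompose by blast
    show "block_word (Suc a) b P q = block_word a b P (h q)"
      using q w'_block[of r d] h_block[of r d] w_block[of "r - 1" d] assms \<open>0 < M\<close> by auto
    show "h (Suc q) = h q \<or> h (Suc q) = Suc (h q)"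
      using q h_Suc by auto
  next
    fix p
    have "p \<le> h (Suc M * p + 0)"
      using h_block[of 0 p] \<open>0 < M\<close> by simp
    then show "\<exists>q. p \<le> h q" ..
  next
    fix q i
    assume "h (Suc q) = h q" "i \<le> K"
    obtain d r where q: "q = Suc M * d + r" "r < Suc M"
      using decompose by blast
    then have "r = 0"
      using h_Suc \<open>h (Suc q) = h q\<close> by (metis n_not_Suc_n)
    moreover have "i < a" "a \<le> M"
      using \<open>i \<le> K\<close> assms by (simp_all add: M_def)
    ultimately show "block_word a b P (h q + i) = block_word a b P (h q)"
      using q h_block[of 0 d] w_block[of i d] w_block[of 0 d] by simp
  qed
  moreover have "h 0 = 0"
    by (simp add: h_def)
  ultimately show ?thesis
    by blast
qed

lemma block_word_in_lang_iff:
  assumes "0 < a"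
  shows "block_word a b P \<in> lang A \<longleftrightarrow> P \<in> atoms A \<and> sat (block_word a b P) 0 A"
proof -
  have "block_word a b P 0 = {P}" "\<forall>k. block_word a b P k \<subseteq> {P}"
    using assms by (simp_all add: block_word_def)
  then show ?thesis
    unfolding lang_def by blast
qed
lemma sat_ltl_block_word_eq:
  assumes "is_ltl B" "next_depth B < N"
  shows "sat (block_word (Suc N) N P) 0 B = sat (block_word N N P) 0 B"
proof -
  obtain h where "h 0 = 0" "stutter_expansion (next_depth B) (block_word N N P) (block_word (Suc N) N P) h"
    using block_word_stutter_expansion[OF assms(2), of N P] by blast
  then show ?thesis
    using sat_stutter_expansion[OF _ assms(1) order_refl, of "block_word N N P" "block_word (Suc N) N P" h 0]
    by simp
qed
theorem mainTheorem2:
  shows "\<exists>A :: 'p ltlc. \<forall>B. is_ltl B \<longrightarrow> lang A \<noteq> lang B"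
proof -
  fix P :: 'p
  let ?A = "Ll (FNot (Atom P)) (Atom P)"
  have "lang ?A \<noteq> lang B" if "is_ltl B" for B
  proof
    assume eq: "lang ?A = lang B"
    define N where "N = Suc (next_depth B)"
    have "sat (block_word (Suc N) N P) 0 ?A"
      using sat_block_word_iff[of "Suc N" N P] by (simp del: sat.simps)
    then have "block_word (Suc N) N P \<in> lang B"
      using eq block_word_in_lang_iff[of "Suc N" N P ?A] by (simp del: sat.simps)
    then have "P \<in> atoms B" "sat (block_word N N P) 0 B"
      using block_word_in_lang_iff[of "Suc N" N P B] sat_ltl_block_word_eq[OF \<open>is_ltl B\<close>, of N P]
      by (simp_all add: N_def)
    then have "block_word N N P \<in> lang ?A"
      using eq block_word_in_lang_iff[of N N P B] by (simp add: N_def)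
    then have "sat (block_word N N P) 0 ?A"
      using block_word_in_lang_iff[of N N P ?A] by (simp add: N_def del: sat.simps)
    then show False
      using sat_block_word_iff[of N N P] by (simp add: N_def del: sat.simps)
  qed
  then show ?thesis
    by blast
qed

end
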